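(* Let $F$ be a field and $R$ a Rota–Baxter operator of nonzero weight on $M_n(F)$ such that $R(1)$ is a diagonal matrix whose diagonal entries take exactly $k$ distinct values $\lambda_1,\dots,\lambda_k$, arranged in consecutive blocks: there are $0=s_0<s_1<\dots<s_k=n$ with the $(i,i)$ entry equal to $\lambda_j$ for $s_{j-1}+1\le i\le s_j$. Let $B_j=\mathrm{Span}\{e_{st}\mid s_{j-1}+1\le s,t\le s_j\}$ and $B=B_1\oplus\dots\oplus B_k$. Then $B$ is a subalgebra of $M_n(F)$ with $R(B)\subseteq B$. If $k=n$, then $R$ is diagonal.
   Context: $e_{st}$ denote matrix units. A linear operator $R$ on an algebra $A$ is a Rota–Baxter operator of weight $\lambda$ if $R(x)R(y)=R(R(x)y+xR(y)+\lambda xy)$ for all $x,y$. An RB-operator $R$ on $M_n(F)$ is called diagonal if there is $\psi\in\mathrm{Aut}(M_n(F))$ with $\psi^{-1}R\psi(D_n)\subseteq D_n$, where $D_n$ is the subalgebra of diagonal matrices. *)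

theory Defs
  imports "Jordan_Normal_Form.Matrix"
begin

text \<open>Matrices in M_n(F) are represented by Jordan_Normal_Form matrices in carrier_mat n n.
  Indices are 0-based: matrix unit e_{st} (1-based) has its entry at (s-1,t-1).\<close>

definition linear_op_mat :: "nat \<Rightarrow> ('a::field mat \<Rightarrow> 'a mat) \<Rightarrow> bool" where
  "linear_op_mat n R \<longleftrightarrow>
     (\<forall>x\<in>carrier_mat n n. R x \<in> carrier_mat n n) \<and>
     (\<forall>x\<in>carrier_mat n n. \<forall>y\<in>carrier_mat n n. R (x + y) = R x + R y) \<and>
     (\<forall>c. \<forall>x\<in>carrier_mat n n. R (c \<cdot>\<^sub>m x) = c \<cdot>\<^sub>m R x)"

definition RB_operator :: "nat \<Rightarrow> 'a::field \<Rightarrow> ('a mat \<Rightarrow> 'a mat) \<Rightarrow> bool" where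
  "RB_operator n lam R \<longleftrightarrow> linear_op_mat n R \<and>
     (\<forall>x\<in>carrier_mat n n. \<forall>y\<in>carrier_mat n n.
        R x * R y = R (R x * y + x * R y + lam \<cdot>\<^sub>m (x * y)))"

definition diag_mats :: "nat \<Rightarrow> 'a::field mat set" where
  "diag_mats n = {A \<in> carrier_mat n n. \<forall>i<n. \<forall>j<n. i \<noteq> j \<longrightarrow> A $$ (i,j) = 0}"

definition mat_alg_aut :: "nat \<Rightarrow> ('a::field mat \<Rightarrow> 'a mat) \<Rightarrow> bool" where
  "mat_alg_aut n \<psi> \<longleftrightarrow> linear_op_mat n \<psi> \<and>
     bij_betw \<psi> (carrier_mat n n) (carrier_mat n n) \<and>
     (\<forall>x\<in>carrier_mat n n. \<forall>y\<in>carrier_mat n n. \<psi> (x * y) = \<psi> x * \<psi> y) \<and>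
     \<psi> (1\<^sub>m n) = 1\<^sub>m n"

definition RB_diagonal :: "nat \<Rightarrow> ('a::field mat \<Rightarrow> 'a mat) \<Rightarrow> bool" where
  "RB_diagonal n R \<longleftrightarrow> (\<exists>\<psi>. mat_alg_aut n \<psi> \<and>
     (\<forall>x\<in>diag_mats n. inv_into (carrier_mat n n) \<psi> (R (\<psi> x)) \<in> diag_mats n))"

definition mat_subalgebra :: "nat \<Rightarrow> 'a::field mat set \<Rightarrow> bool" where
  "mat_subalgebra n S \<longleftrightarrow> S \<subseteq> carrier_mat n n \<and> 0\<^sub>m n n \<in> S \<and> 1\<^sub>m n \<in> S \<and>
     (\<forall>x\<in>S. \<forall>y\<in>S. x + y \<in> S \<and> x * y \<in> S) \<and> (\<forall>c. \<forall>x\<in>S. c \<cdot>\<^sub>m x \<in> S)"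

text \<open>B = B_1 + ... + B_k, where B_j = span of e_{st} with s,t in block j, i.e. (0-based)
  s_{j-1} \<le> s,t < s_j. Equivalently: matrices vanishing outside the diagonal blocks.\<close>
definition block_subspace :: "nat \<Rightarrow> nat \<Rightarrow> (nat \<Rightarrow> nat) \<Rightarrow> 'a::field mat set" where
  "block_subspace n k s = {A \<in> carrier_mat n n. \<forall>i<n. \<forall>j<n.
      \<not> (\<exists>b\<in>{1..k}. s (b-1) \<le> i \<and> i < s b \<and> s (b-1) \<le> j \<and> j < s b) \<longrightarrow> A $$ (i,j) = 0}"

end

theory Submission
  imports Defs
begin

text \<open>Both B and the centralizer of the diagonal matrix R(1) consist of the matrices whose
  (i,j) entry vanishes unless i and j lie in the same block: for the centralizer because
  R(1) X - X R(1) has (i,j) entry (R(1)_ii - R(1)_jj) X_ij, and the \<lambda>_j are distinct.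
  Such a zero pattern, coming from any labelling of the indices, is closed under products.
  Putting x = 1 and y = 1 in the Rota--Baxter identity and comparing shows that R(1) commutes
  with R(X) whenever it commutes with X, so R preserves B. If k = n, all blocks are singletons,
  B consists of the diagonal matrices, and the identity automorphism shows that R is
  diagonal.\<close>

definition pattern_mats :: "nat \<Rightarrow> (nat \<Rightarrow> 'b) \<Rightarrow> 'a::field mat set" where
  "pattern_mats n f = {A \<in> carrier_mat n n. \<forall>i<n. \<forall>j<n. f i \<noteq> f j \<longrightarrow> A $$ (i,j) = 0}"

definition centralizer_mat :: "nat \<Rightarrow> 'a::field mat \<Rightarrow> 'a mat set" where
  "centralizer_mat n a = {X \<in> carrier_mat n n. a * X = X * a}"

lemma mat_subalgebra_pattern_mats: "mat_subalgebra n (pattern_mats n f)"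
  unfolding mat_subalgebra_def
proof (intro conjI ballI allI)
  fix x y :: "'a mat" assume x: "x \<in> pattern_mats n f" and y: "y \<in> pattern_mats n f"
  then have xc: "x \<in> carrier_mat n n" and yc: "y \<in> carrier_mat n n"
    by (auto simp: pattern_mats_def)
  show "x + y \<in> pattern_mats n f" using x y by (auto simp: pattern_mats_def)
  have "(x * y) $$ (i,j) = 0" if ij: "i < n" "j < n" "f i \<noteq> f j" for i j
  proof -
    have "x $$ (i,l) * y $$ (l,j) = 0" if "l < n" for l
      using x y ij that by (cases "f i = f l") (auto simp: pattern_mats_def)
    then show ?thesis using xc yc ij by (auto simp: scalar_prod_def intro!: sum.neutral)
  qed
  then show "x * y \<in> pattern_mats n f" using xc yc by (simp add: pattern_mats_def)
qed (auto simp: pattern_mats_def)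

lemma pattern_mats_relabel:
  assumes "\<forall>i<n. g i = h (f i)" and "inj_on h (f ` {..<n})"
  shows "pattern_mats n g = pattern_mats n f"
proof -
  have "g i \<noteq> g j \<longleftrightarrow> f i \<noteq> f j" if "i < n" "j < n" for i j
    using assms that by (auto dest: inj_onD)
  then show ?thesis by (auto simp: pattern_mats_def)
qed

lemma pattern_mats_inj:
  assumes "inj_on f {..<n}"
  shows "pattern_mats n f = diag_mats n"
  using assms by (auto simp: pattern_mats_def diag_mats_def dest: inj_onD)

lemma diag_mats_mult_index:
  assumes "D \<in> diag_mats n" "X \<in> carrier_mat n n" "i < n" "j < n"
  shows "(D * X) $$ (i,j) = D $$ (i,i) * X $$ (i,j)"
    and "(X * D) $$ (i,j) = X $$ (i,j) * D $$ (j,j)"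
proof -
  have D: "D \<in> carrier_mat n n" "\<And>l. l < n \<Longrightarrow> l \<noteq> i \<Longrightarrow> D $$ (i,l) = 0"
    "\<And>l. l < n \<Longrightarrow> l \<noteq> j \<Longrightarrow> D $$ (l,j) = 0"
    using assms by (auto simp: diag_mats_def)
  have "(D * X) $$ (i,j) = (\<Sum>l\<in>{0..<n}. D $$ (i,l) * X $$ (l,j))"
    using D(1) assms(2-4) by (simp add: scalar_prod_def)
  also have "\<dots> = D $$ (i,i) * X $$ (i,j)"
    using D(2) assms(3) by (subst sum.remove[of _ i]) (auto intro!: sum.neutral)
  finally show "(D * X) $$ (i,j) = D $$ (i,i) * X $$ (i,j)" .
  have "(X * D) $$ (i,j) = (\<Sum>l\<in>{0..<n}. X $$ (i,l) * D $$ (l,j))"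
    using D(1) assms(2-4) by (simp add: scalar_prod_def)
  also have "\<dots> = X $$ (i,j) * D $$ (j,j)"
    using D(3) assms(4) by (subst sum.remove[of _ j]) (auto intro!: sum.neutral)
  finally show "(X * D) $$ (i,j) = X $$ (i,j) * D $$ (j,j)" .
qed

lemma centralizer_mat_diag:
  assumes D: "D \<in> diag_mats n"
  shows "centralizer_mat n D = pattern_mats n (\<lambda>i. D $$ (i,i))"
proof -
  have Dc: "D \<in> carrier_mat n n" using D by (simp add: diag_mats_def)
  have "D * X = X * D \<longleftrightarrow> (\<forall>i<n. \<forall>j<n. D $$ (i,i) \<noteq> D $$ (j,j) \<longrightarrow> X $$ (i,j) = 0)"
    if X: "X \<in> carrier_mat n n" for X
  proof -
    have "D * X = X * D \<longleftrightarrow> (\<forall>i<n. \<forall>j<n. (D * X) $$ (i,j) = (X * D) $$ (i,j))"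
      using Dc X by (auto intro!: eq_matI simp del: index_mult_mat(1))
    also have "\<dots> \<longleftrightarrow> (\<forall>i<n. \<forall>j<n. (D $$ (i,i) - D $$ (j,j)) * X $$ (i,j) = 0)"
      using diag_mats_mult_index[OF D X] by (simp add: algebra_simps)
    finally show ?thesis by auto
  qed
  then show ?thesis by (auto simp: centralizer_mat_def pattern_mats_def)
qed

lemma RB_operator_centralizer_R1:
  assumes RB: "RB_operator n w R"
  shows "R ` centralizer_mat n (R (1\<^sub>m n)) \<subseteq> centralizer_mat n (R (1\<^sub>m n))"
proof
  fix Y assume "Y \<in> R ` centralizer_mat n (R (1\<^sub>m n))"
  then obtain X where X: "X \<in> carrier_mat n n" "R (1\<^sub>m n) * X = X * R (1\<^sub>m n)" and Y: "Y = R X"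
    by (auto simp: centralizer_mat_def)
  have RX: "R X \<in> carrier_mat n n" and R1: "R (1\<^sub>m n) \<in> carrier_mat n n"
    using RB X(1) by (auto simp: RB_operator_def linear_op_mat_def)
  have "R (1\<^sub>m n) * R X = R (R (1\<^sub>m n) * X + R X + w \<cdot>\<^sub>m X)"
    using RB X(1) RX by (simp add: RB_operator_def)
  also have "\<dots> = R (R X + X * R (1\<^sub>m n) + w \<cdot>\<^sub>m X)"
    using X RX R1 by (metis comm_add_mat mult_carrier_mat)
  also have "\<dots> = R X * R (1\<^sub>m n)"
    using RB X(1) RX by (simp add: RB_operator_def)
  finally show "Y \<in> centralizer_mat n (R (1\<^sub>m n))"
    using RX Y by (simp add: centralizer_mat_def)
qed

lemma RB_diagonal_if_preserves_diag_mats: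
  fixes R :: "'a::field mat \<Rightarrow> 'a mat"
  assumes "R ` diag_mats n \<subseteq> diag_mats n"
  shows "RB_diagonal n R"
  unfolding RB_diagonal_def
proof (intro exI[of _ id] conjI ballI)
  show "mat_alg_aut n id" by (simp add: mat_alg_aut_def linear_op_mat_def)
  fix x :: "'a mat" assume "x \<in> diag_mats n"
  then have "R x \<in> diag_mats n" using assms by auto
  moreover from this have "inv_into (carrier_mat n n) id (R (id x)) = R x"
    by (simp add: diag_mats_def inv_into_f_eq)
  ultimately show "inv_into (carrier_mat n n) id (R (id x)) \<in> diag_mats n" by simp
qed

lemma partition_growth:
  fixes s :: "nat \<Rightarrow> nat"
  assumes smono: "\<forall>j<k. s j < s (Suc j)" and "j \<le> j'" "j' \<le> k"
  shows "s j + (j' - j) \<le> s j'"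
  using assms(2,3)
proof (induction j' rule: dec_induct)
  case (step m)
  have "s j + (m - j) \<le> s m" "s m < s (Suc m)" using smono step by simp_all
  then show ?case using step.hyps by linarith
qed simp

lemma partition_eq_id:
  fixes s :: "nat \<Rightarrow> nat"
  assumes smono: "\<forall>j<k. s j < s (Suc j)" and "s 0 = 0" "s k = k" and "j \<le> k"
  shows "s j = j"
  using partition_growth[OF smono, of 0 j] partition_growth[OF smono, of j k] assms(2-4)
  by simp

definition block_index :: "(nat \<Rightarrow> nat) \<Rightarrow> nat \<Rightarrow> nat" where
  "block_index s i = (LEAST b. i < s b)"

lemma block_index_iff:
  fixes s :: "nat \<Rightarrow> nat"
  assumes smono: "\<forall>j<k. s j < s (Suc j)" and s0: "s 0 = 0" and i: "i < s k"
  shows "b \<in> {1..k} \<and> s (b-1) \<le> i \<and> i < s b \<longleftrightarrow> b = block_index s i"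
proof
  assume b: "b \<in> {1..k} \<and> s (b-1) \<le> i \<and> i < s b"
  have "b \<le> c" if "i < s c" for c
  proof (rule ccontr)
    assume "\<not> b \<le> c"
    then have "c \<le> b - 1" "b - 1 \<le> k" using b by auto
    then have "s c \<le> s (b-1)" using partition_growth[OF smono] by fastforce
    then show False using b that by simp
  qed
  then show "b = block_index s i" unfolding block_index_def using b by (intro Least_equality[symmetric]) auto
next
  assume b: "b = block_index s i"
  have "i < s b" using LeastI[of "\<lambda>b. i < s b" k] i by (simp add: b block_index_def)
  moreover have "b \<le> k" using Least_le[of "\<lambda>b. i < s b" k] i by (simp add: b block_index_def)
  moreover have "b \<noteq> 0" using \<open>i < s b\<close> s0 by (cases b) auto
  moreover have "\<not> i < s (b-1)"
    using not_less_Least[of "b-1" "\<lambda>b. i < s b"] \<open>b \<noteq> 0\<close> by (simp add: b block_index_def)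
  ultimately show "b \<in> {1..k} \<and> s (b-1) \<le> i \<and> i < s b" by auto
qed

lemma block_subspace_eq_pattern_mats:
  fixes s :: "nat \<Rightarrow> nat"
  assumes smono: "\<forall>j<k. s j < s (Suc j)" and s0: "s 0 = 0" and sk: "s k = n"
  shows "block_subspace n k s = pattern_mats n (block_index s)"
proof -
  have "(\<exists>b\<in>{1..k}. s (b-1) \<le> i \<and> i < s b \<and> s (b-1) \<le> j \<and> j < s b)
          \<longleftrightarrow> block_index s i = block_index s j" if "i < n" "j < n" for i j
    using block_index_iff[OF smono s0, of i] block_index_iff[OF smono s0, of j] sk that
    by (metis (no_types, lifting))
  then show ?thesis unfolding block_subspace_def pattern_mats_def by auto
qed

lemma mat_subalgebra_block_subspace:
  fixes s :: "nat \<Rightarrow> nat"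
  assumes "\<forall>j<k. s j < s (Suc j)" and "s 0 = 0" and "s k = n"
  shows "mat_subalgebra n (block_subspace n k s)"
  unfolding block_subspace_eq_pattern_mats[OF assms] by (rule mat_subalgebra_pattern_mats)

theorem proposition2:
  fixes n k :: nat and s :: "nat \<Rightarrow> nat" and lam :: "nat \<Rightarrow> 'a::field"
    and w :: 'a and R :: "'a mat \<Rightarrow> 'a mat"
  assumes RB: "RB_operator n w R" and w: "w \<noteq> 0"
    and s0: "s 0 = 0" and sk: "s k = n" and smono: "\<forall>j<k. s j < s (Suc j)"
    and lam_dist: "inj_on lam {1..k}"
    and R1_diag: "R (1\<^sub>m n) \<in> diag_mats n"
    and R1_blocks: "\<forall>j\<in>{1..k}. \<forall>i. s (j-1) \<le> i \<and> i < s j \<longrightarrow> R (1\<^sub>m n) $$ (i,i) = lam j"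
  shows "mat_subalgebra n (block_subspace n k s) \<and> R ` block_subspace n k s \<subseteq> block_subspace n k s
         \<and> (k = n \<longrightarrow> RB_diagonal n R)"
proof -
  have blocks: "(block_subspace n k s :: 'a mat set) = pattern_mats n (block_index s)"
    using block_subspace_eq_pattern_mats[OF smono s0 sk] .
  have block_of: "block_index s i \<in> {1..k} \<and> s (block_index s i - 1) \<le> i \<and> i < s (block_index s i)"
    if "i < n" for i
    using block_index_iff[OF smono s0] sk that by blast
  have "centralizer_mat n (R (1\<^sub>m n)) = pattern_mats n (block_index s)"
    unfolding centralizer_mat_diag[OF R1_diag]
    using block_of R1_blocks lam_dist by (intro pattern_mats_relabel[where h = lam]) (auto intro: inj_on_subset)
  then have R_B: "R ` block_subspace n k s \<subseteq> block_subspace n k s"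
    using RB_operator_centralizer_R1[OF RB] blocks by simp
  have "(block_subspace n n s :: 'a mat set) = diag_mats n" if "k = n"
  proof -
    have "block_index s i = Suc i" if "i < n" for i
      using block_index_iff[OF smono s0, of i "Suc i"] partition_eq_id[OF smono s0] sk \<open>k = n\<close> that
      by simp
    then have "inj_on (block_index s) {..<n}" by (simp add: inj_on_def)
    then show ?thesis using \<open>k = n\<close> blocks pattern_mats_inj by simp
  qed
  then show ?thesis
    using mat_subalgebra_block_subspace[OF smono s0 sk] R_B RB_diagonal_if_preserves_diag_mats
    by auto
qed

end
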